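(* Let $v_1,\dots,v_{d+1}$ be the vertices of a $d$-simplex in general position, and let $\ell,k\ge0$ be integers with $\ell+k\le d-2$. Let $p$ be any real-valued function of $\ell$ real variables (defined at all points $(z(\sigma,1),\dots,z(\sigma,\ell))$), and set $q(\sigma)=p(z(\sigma,1),\dots,z(\sigma,\ell))$ for $\sigma\in\mathfrak S_d$. Then $$\sum_{\sigma\in\mathfrak S_d}\operatorname{sign}(\sigma)\,q(\sigma)\,\frac{\prod_{j=\ell+1}^dz(\sigma,j)}{z(\sigma,\ell+1)^{k+1}}=0.$$
   Context: Write $v_i=(x_{i,1},\dots,x_{i,d})$. $\pi^{(j)}$ forgets the last $j$ coordinates; general position means that for every $0\le k\le d-1$ and every $(k+1)$-subset $U$ of the vertices, $\pi^{(d-k)}(\mathrm{conv}(U))$ is a $k$-simplex. $X(\sigma,k)$ ($1\le k\le d$) is the $(k+1)\times(k+1)$ matrix with rows $(1,x_{\sigma(r),1},\dots,x_{\sigma(r),k})$, $r=1,\dots,k$, and last row $(1,x_{d+1,1},\dots,x_{d+1,k})$; $Y(\sigma,k)$ is the $k\times k$ matrix with rows $(1,x_{\sigma(r),1},\dots,x_{\sigma(r),k-1})$, $r=1,\dots,k$; $z(\sigma,k)=\det X(\sigma,k)/\det Y(\sigma,k)$ (nonzero by general position). *)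

theory Defs
  imports "Jordan_Normal_Form.Determinant"
begin

text \<open>Vertices are encoded as v :: nat => nat => real with v i j = x_{i,j}
  for 1 <= i <= d+1 and 1 <= j <= d (other values are irrelevant).\<close>

definition aff_indep_proj :: "(nat \<Rightarrow> nat \<Rightarrow> real) \<Rightarrow> nat \<Rightarrow> nat set \<Rightarrow> bool" where
  "aff_indep_proj v k U \<longleftrightarrow>
     (\<forall>c :: nat \<Rightarrow> real. (\<Sum>u\<in>U. c u) = 0 \<and> (\<forall>j\<in>{1..k}. (\<Sum>u\<in>U. c u * v u j) = 0)
        \<longrightarrow> (\<forall>u\<in>U. c u = 0))"

definition is_d_simplex :: "nat \<Rightarrow> (nat \<Rightarrow> nat \<Rightarrow> real) \<Rightarrow> bool" where
  "is_d_simplex d v \<longleftrightarrow> aff_indep_proj v d {1..d+1}"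

text \<open>General position: for each 0 <= k <= d-1 and each (k+1)-subset U of the vertices,
  the projection pi^(d-k) (to the first k coordinates) of conv U is a k-simplex.\<close>
definition general_position :: "nat \<Rightarrow> (nat \<Rightarrow> nat \<Rightarrow> real) \<Rightarrow> bool" where
  "general_position d v \<longleftrightarrow>
     (\<forall>k<d. \<forall>U. U \<subseteq> {1..d+1} \<and> card U = k + 1 \<longrightarrow> aff_indep_proj v k U)"

definition Xmat :: "nat \<Rightarrow> (nat \<Rightarrow> nat \<Rightarrow> real) \<Rightarrow> (nat \<Rightarrow> nat) \<Rightarrow> nat \<Rightarrow> real mat" where
  "Xmat d v \<sigma> k = mat (k+1) (k+1)
     (\<lambda>(r, j). if j = 0 then 1 else if r < k then v (\<sigma> (r+1)) j else v (d+1) j)"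

definition Ymat :: "(nat \<Rightarrow> nat \<Rightarrow> real) \<Rightarrow> (nat \<Rightarrow> nat) \<Rightarrow> nat \<Rightarrow> real mat" where
  "Ymat v \<sigma> k = mat k k (\<lambda>(r, j). if j = 0 then 1 else v (\<sigma> (r+1)) j)"

definition zval :: "nat \<Rightarrow> (nat \<Rightarrow> nat \<Rightarrow> real) \<Rightarrow> (nat \<Rightarrow> nat) \<Rightarrow> nat \<Rightarrow> real" where
  "zval d v \<sigma> k = det (Xmat d v \<sigma> k) / det (Ymat v \<sigma> k)"

end

theory Submission
  imports Defs "HOL-Combinatorics.Multiset_Permutations"
begin

(* Write D xs for the determinant of the matrix with rows (1, x_{i,1}, ..., x_{i,n-1}), i in xs,
   where n = length xs, and t for the index d+1. Then
   z(sigma,j) = D [sigma 1, ..., sigma j, t] / D [sigma 1, ..., sigma j] and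
   sign sigma = D [sigma 1, ..., sigma d] / D [1, ..., d]. Group the permutations by their first
   l values T, on which alone q depends. With B the remaining indices and w a = z(T a), the
   Pluecker relation gives w a - w b = D (T t) D (T a b) / (D (T a) D (T b)); by induction on |B|
   this yields a closed form for the sum, over all orderings ys of B, of D (T ys) times the product
   of the z's. Consequently the part of the sum belonging to T is a constant times
   sum_a w a ^ (|B| - 2 - k) / prod_{b <> a} (w a - w b), a divided difference of a power of
   degree below |B| - 1, hence zero. *)

section \<open>Affine determinants\<close>

definition affine_mat :: "(nat \<Rightarrow> nat \<Rightarrow> real) \<Rightarrow> nat list \<Rightarrow> real mat" where
  "affine_mat v xs = mat (length xs) (length xs) (\<lambda>(r, c). if c = 0 then 1 else v (xs ! r) c)"

definition affine_det :: "(nat \<Rightarrow> nat \<Rightarrow> real) \<Rightarrow> nat list \<Rightarrow> real" where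
  "affine_det v xs = det (affine_mat v xs)"

lemma affine_mat_carrier [simp]: "affine_mat v xs \<in> carrier_mat (length xs) (length xs)"
  by (simp add: affine_mat_def)

lemma affine_mat_index [simp]:
  "r < length xs \<Longrightarrow> c < length xs \<Longrightarrow>
     affine_mat v xs $$ (r, c) = (if c = 0 then 1 else v (xs ! r) c)"
  by (simp add: affine_mat_def)

lemma affine_det_snoc_expansion:
  "affine_det v (T @ [p]) =
     (\<Sum>j<Suc (length T). (if j = 0 then 1 else v p j) * cofactor (affine_mat v (T @ [q])) (length T) j)"
proof -
  have cof: "cofactor (affine_mat v (T @ [p])) (length T) j = cofactor (affine_mat v (T @ [q])) (length T) j"
    for j
  proof -
    have "mat_delete (affine_mat v (T @ [p])) (length T) j = mat_delete (affine_mat v (T @ [q])) (length T) j"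
      unfolding mat_delete_def affine_mat_def by (rule eq_matI) (auto simp: nth_append)
    thus ?thesis unfolding cofactor_def by simp
  qed
  have "affine_det v (T @ [p]) = (\<Sum>j<Suc (length T).
      affine_mat v (T @ [p]) $$ (length T, j) * cofactor (affine_mat v (T @ [p])) (length T) j)"
    unfolding affine_det_def
    by (rule laplace_expansion_row[of _ "Suc (length T)"]) (auto simp: affine_mat_def)
  thus ?thesis by (simp only: cof) (intro sum.cong refl, simp)
qed

lemma affine_det_snoc_member:
  assumes "p \<in> set T"
  shows "affine_det v (T @ [p]) = 0"
proof -
  obtain i where i: "i < length T" "p = T ! i" using assms by (auto simp: in_set_conv_nth)
  show ?thesis unfolding affine_det_def
    by (rule det_identical_rows[of _ "Suc (length T)" i "length T"])
       (use i in \<open>auto simp: row_def nth_append affine_mat_def\<close>)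
qed

lemma affine_det_pluecker:
  "affine_det v (T @ [a]) * affine_det v (T @ [b, c]) - affine_det v (T @ [b]) * affine_det v (T @ [a, c])
     + affine_det v (T @ [c]) * affine_det v (T @ [a, b]) = 0"
proof -
  define m where "m = length T"
  define xs where "xs = T @ [a, b, c]"
  \<comment> \<open>The last column of N is a combination of its first m+1 columns, with the cofactors of
      the last row of affine_mat v (T @ [a]) as coefficients, so det N = 0; expanding det N along
      that column gives the identity.\<close>
  define N where "N = mat (m + 3) (m + 3) (\<lambda>(r, j).
    if j = m + 2 then affine_det v (T @ [xs ! r]) else if j = 0 then 1 else v (xs ! r) j)"
  have N: "N \<in> carrier_mat (m + 3) (m + 3)" by (simp add: N_def)
  define w where "w = vec (m + 3) (\<lambda>j.
    if j \<le> m then cofactor (affine_mat v (T @ [a])) m j else if j = m + 1 then 0 else (-1 :: real))"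
  have "w \<in> carrier_vec (m + 3)" by (simp add: w_def)
  moreover have "w \<noteq> 0\<^sub>v (m + 3)"
  proof
    assume "w = 0\<^sub>v (m + 3)"
    hence "w $ (m + 2) = 0" by simp
    thus False by (simp add: w_def)
  qed
  moreover have "N *\<^sub>v w = 0\<^sub>v (m + 3)"
  proof (rule eq_vecI)
    fix r assume "r < dim_vec (0\<^sub>v (m + 3) :: real vec)"
    hence r: "r < m + 3" by simp
    have "(N *\<^sub>v w) $ r = (\<Sum>j<m + 1. N $$ (r, j) * w $ j) + N $$ (r, m + 2) * w $ (m + 2)"
      using r N by (simp add: scalar_prod_def w_def atLeast0LessThan numeral_3_eq_3)
    also have "(\<Sum>j<m + 1. N $$ (r, j) * w $ j) = affine_det v (T @ [xs ! r])"
      using r affine_det_snoc_expansion[of v T "xs ! r" a]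
      by (simp add: N_def w_def m_def)
    finally show "(N *\<^sub>v w) $ r = 0\<^sub>v (m + 3) $ r" using r by (simp add: N_def w_def)
  qed (simp add: N_def)
  ultimately have "det N = 0" using det_0_iff_vec_prod_zero[OF N] by blast
  moreover have "det N = (\<Sum>r<m + 3. N $$ (r, m + 2) * cofactor N r (m + 2))"
    by (rule laplace_expansion_column[OF N]) simp
  moreover have "N $$ (r, m + 2) = 0" if "r < m" for r
    using that affine_det_snoc_member[of "T ! r" T v]
    by (simp add: N_def xs_def m_def nth_append)
  moreover have "mat_delete N m (m + 2) = affine_mat v (T @ [b, c])"
    and "mat_delete N (m + 1) (m + 2) = affine_mat v (T @ [a, c])"
    and "mat_delete N (m + 2) (m + 2) = affine_mat v (T @ [a, b])"
    unfolding mat_delete_def affine_mat_def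
    by (rule eq_matI; auto simp: N_def xs_def m_def nth_append less_Suc_eq)+
  ultimately show ?thesis
    by (simp add: numeral_3_eq_3 N_def xs_def m_def cofactor_def affine_det_def[symmetric] nth_append)
qed

lemma affine_det_permute_list:
  assumes p: "p permutes {..<length ys}"
  shows "affine_det v (permute_list p ys) = of_int (sign p) * affine_det v ys"
proof -
  have "affine_mat v (permute_list p ys)
      = mat (length ys) (length ys) (\<lambda>(i, j). affine_mat v ys $$ (p i, j))"
    using permutes_in_image[OF p]
    by (intro eq_matI) (auto simp: affine_mat_def permute_list_nth[OF p])
  thus ?thesis unfolding affine_det_def
    using det_permute_rows[OF affine_mat_carrier, of p] p by (simp add: atLeast0LessThan)
qed

lemma affine_det_mult_snoc_mset_eq:
  assumes "mset xs = mset ys"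
  shows "affine_det v xs * affine_det v (xs @ [c]) = affine_det v ys * affine_det v (ys @ [c])"
proof -
  obtain p where p: "p permutes {..<length ys}" and xs: "xs = permute_list p ys"
    using mset_eq_permutation[OF assms] by metis
  have p': "p permutes {..<length (ys @ [c])}"
    using p by (rule permutes_subset) auto
  have "permute_list p (ys @ [c]) = xs @ [c]"
  proof (rule nth_equalityI)
    fix i assume "i < length (permute_list p (ys @ [c]))"
    hence "i < length ys \<or> i = length ys" by auto
    thus "permute_list p (ys @ [c]) ! i = (xs @ [c]) ! i"
      using permutes_in_image[OF p, of i] permutes_not_in[OF p, of "length ys"]
      by (auto simp: xs permute_list_nth[OF p'] permute_list_nth[OF p] nth_append)
  qed (simp add: xs)
  hence "affine_det v (xs @ [c]) = of_int (sign p) * affine_det v (ys @ [c])"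
    using affine_det_permute_list[OF p'] by simp
  moreover have "real_of_int (sign p) * of_int (sign p) = 1"
    by (metis of_int_mult of_int_1 sign_idempotent)
  ultimately show ?thesis
    unfolding xs affine_det_permute_list[OF p] by (simp add: algebra_simps)
qed

lemma affine_det_map_permutes:
  assumes xs: "distinct xs" and \<sigma>: "\<sigma> permutes set xs"
  shows "affine_det v (map \<sigma> xs) = of_int (sign \<sigma>) * affine_det v xs"
proof -
  define f where "f = inv_into {..<length xs} ((!) xs)"
  have f: "bij_betw f (set xs) {..<length xs}"
    unfolding f_def by (rule bij_betw_inv_into[OF bij_betw_nth[OF xs refl refl]])
  define p where "p = map_permutation (set xs) f \<sigma>"
  have p: "p permutes {..<length xs}"
    unfolding p_def by (rule map_permutation_permutes[OF f \<sigma>])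
  have "xs ! p i = \<sigma> (xs ! i)" if i: "i < length xs" for i
  proof -
    have "f (xs ! i) = i"
      using i xs by (simp add: f_def inv_into_f_f inj_on_nth)
    hence "p i = f (\<sigma> (xs ! i))"
      using map_permutation_apply[OF bij_betw_imp_inj_on[OF f], of "xs ! i" \<sigma>] i
      by (simp add: p_def)
    moreover have "\<sigma> (xs ! i) \<in> set xs" using permutes_in_image[OF \<sigma>] i by simp
    ultimately show ?thesis
      by (simp add: f_def f_inv_into_f[where f = "(!) xs"] bij_betw_nth[OF xs refl refl, unfolded bij_betw_def])
  qed
  hence "permute_list p xs = map \<sigma> xs"
    by (intro nth_equalityI) (simp_all add: permute_list_nth[OF p])
  moreover have "sign p = sign \<sigma>"
    unfolding p_def by (rule sign_map_permutation[OF bij_betw_imp_inj_on[OF f] \<sigma>]) simp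
  ultimately show ?thesis using affine_det_permute_list[OF p] by simp
qed

lemma affine_det_nonzero:
  assumes indep: "aff_indep_proj v (length xs - 1) (set xs)" and xs: "distinct xs"
  shows "affine_det v xs \<noteq> 0"
proof
  assume det0: "affine_det v xs = 0"
  define n where "n = length xs"
  have A: "(affine_mat v xs)\<^sup>T \<in> carrier_mat n n" by (simp add: n_def)
  have "det ((affine_mat v xs)\<^sup>T) = 0"
    using det0 det_transpose[of "affine_mat v xs" n] by (simp add: affine_det_def n_def)
  then obtain c where c: "c \<in> carrier_vec n" "c \<noteq> 0\<^sub>v n" "(affine_mat v xs)\<^sup>T *\<^sub>v c = 0\<^sub>v n"
    using det_0_iff_vec_prod_zero[OF A] by blast
  \<comment> \<open>A kernel vector of the transpose is an affine dependence among the points.\<close>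
  have col: "(\<Sum>r<n. (if j = 0 then 1 else v (xs ! r) j) * c $ r) = 0" if j: "j < n" for j
  proof -
    have "((affine_mat v xs)\<^sup>T *\<^sub>v c) $ j = 0" using c(3) j by simp
    moreover have "((affine_mat v xs)\<^sup>T *\<^sub>v c) $ j = (\<Sum>r\<in>{0..<n}. affine_mat v xs $$ (r, j) * c $ r)"
      using j c(1) by (simp add: scalar_prod_def n_def affine_mat_def)
    ultimately show ?thesis using j by (simp add: atLeast0LessThan n_def)
  qed
  define cu where "cu u = c $ (inv_into {..<n} ((!) xs) u)" for u
  have cu: "cu (xs ! r) = c $ r" if "r < n" for r
    using that xs by (simp add: cu_def inv_into_f_f inj_on_nth n_def)
  have sum_set: "(\<Sum>u\<in>set xs. g u) = (\<Sum>r<n. g (xs ! r))" for g :: "nat \<Rightarrow> real"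
    using xs by (simp add: sum.distinct_set_conv_list sum_list_sum_nth atLeast0LessThan n_def)
  have "\<forall>u\<in>set xs. cu u = 0"
  proof (cases "xs = []")
    case False
    show ?thesis
      using indep unfolding aff_indep_proj_def
    proof (elim allE impE, intro conjI ballI)
      show "(\<Sum>u\<in>set xs. cu u) = 0"
        using col[of 0] False by (simp add: sum_set cu n_def)
      fix j assume "j \<in> {1..length xs - 1}"
      hence "j < n" "j \<noteq> 0" by (auto simp: n_def)
      thus "(\<Sum>u\<in>set xs. cu u * v u j) = 0"
        using col[of j] by (simp add: sum_set cu mult.commute)
    qed
  qed simp
  hence "c = 0\<^sub>v n"
    using c(1) cu by (intro eq_vecI) (auto simp: n_def)
  thus False using c(2) by simp
qed

lemma Xmat_eq_affine_mat: "Xmat d v \<sigma> k = affine_mat v (map \<sigma> [1..<k+1] @ [Suc d])"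
  by (rule eq_matI) (auto simp: Xmat_def affine_mat_def nth_append simp del: upt_Suc)

lemma Ymat_eq_affine_mat: "Ymat v \<sigma> k = affine_mat v (map \<sigma> [1..<k+1])"
  by (rule eq_matI) (auto simp: Ymat_def affine_mat_def simp del: upt_Suc)

section \<open>Divided differences of powers\<close>

text \<open>The divided difference of \<open>t ^ m\<close> at the nodes \<open>w ` B\<close>: the complete homogeneous
  symmetric polynomial of degree \<open>m + 1 - card B\<close> in these nodes.\<close>
definition divided_difference_power :: "('a \<Rightarrow> 'b :: field) \<Rightarrow> 'a set \<Rightarrow> nat \<Rightarrow> 'b" where
  "divided_difference_power w B m = (\<Sum>a\<in>B. w a ^ m / (\<Prod>b\<in>B - {a}. (w a - w b)))"

lemma divided_difference_power_Suc:
  assumes B: "finite B" "inj_on w B" and c: "c \<in> B"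
  shows "divided_difference_power w B (Suc m)
           = w c * divided_difference_power w B m + divided_difference_power w (B - {c}) m"
proof -
  have "divided_difference_power w B (Suc m) - w c * divided_difference_power w B m
      = (\<Sum>a\<in>B. w a ^ m * (w a - w c) / (\<Prod>b\<in>B - {a}. (w a - w b)))"
    unfolding divided_difference_power_def
    by (simp add: sum_distrib_left sum_subtractf[symmetric] algebra_simps diff_divide_distrib)
  also have "\<dots> = (\<Sum>a\<in>B - {c}. w a ^ m * (w a - w c) / (\<Prod>b\<in>B - {a}. (w a - w b)))"
    using B c by (subst sum.remove[of B c]) auto
  also have "\<dots> = divided_difference_power w (B - {c}) m"
    unfolding divided_difference_power_def
  proof (rule sum.cong[OF refl])
    fix a assume a: "a \<in> B - {c}"
    have "c \<in> B - {a}" "B - {a} - {c} = B - {c} - {a}" using a c by blast+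
    hence "(\<Prod>b\<in>B - {a}. (w a - w b)) = (w a - w c) * (\<Prod>b\<in>B - {c} - {a}. (w a - w b))"
      using B prod.remove[of "B - {a}" c "\<lambda>b. w a - w b"] by simp
    moreover have "w a \<noteq> w c" using B a c by (auto dest: inj_onD)
    ultimately show "w a ^ m * (w a - w c) / (\<Prod>b\<in>B - {a}. (w a - w b))
        = w a ^ m / (\<Prod>b\<in>B - {c} - {a}. (w a - w b))"
      by simp
  qed
  finally show ?thesis by (simp add: algebra_simps)
qed

lemma divided_difference_power_swap:
  assumes "finite B" "inj_on w B" "c \<in> B" "e \<in> B"
  shows "(w c - w e) * divided_difference_power w B m
           = divided_difference_power w (B - {e}) m - divided_difference_power w (B - {c}) m"
  using divided_difference_power_Suc[OF assms(1-3), of m] divided_difference_power_Suc[OF assms(1,2,4), of m]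
  by (simp add: algebra_simps)

lemma divided_difference_power_below_card:
  assumes "finite B" "inj_on w B" "m < card B"
  shows "divided_difference_power w B m = (if Suc m = card B then 1 else 0)"
  using assms
proof (induction "card B" arbitrary: B m)
  case 0
  thus ?case by simp
next
  case (Suc n)
  show ?case
  proof (cases n)
    case 0
    hence "card B = 1" using Suc.hyps(2) by simp
    then obtain a where "B = {a}" by (rule card_1_singletonE)
    thus ?thesis using Suc.prems 0 by (simp add: divided_difference_power_def)
  next
    case (Suc n')
    have "B \<noteq> {}" using \<open>Suc n = card B\<close> by auto
    then obtain c where c: "c \<in> B" by blast
    have "card (B - {c}) = Suc n'" using c \<open>Suc n = card B\<close> Suc by simp
    hence "B - {c} \<noteq> {}" by (metis card.empty Zero_not_Suc)
    then obtain e where e: "e \<in> B - {c}" by blast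
    have ce: "c \<in> B" "e \<in> B" "c \<noteq> e" using c e by auto
    have IH: "divided_difference_power w (B - {x}) m' = (if Suc m' = n then 1 else 0)"
      if "x \<in> B" "m' < n" for x m'
    proof -
      have "n = card (B - {x})" using that(1) \<open>Suc n = card B\<close> Suc.prems(1) by simp
      from Suc.hyps(1)[OF this] show ?thesis
        using Suc.prems(1,2) Suc.hyps(2)[symmetric] that by (simp add: inj_on_diff)
    qed
    have zero: "divided_difference_power w B m' = 0" if "m' < n" for m'
    proof -
      have "(w c - w e) * divided_difference_power w B m' = 0"
        using divided_difference_power_swap[OF Suc.prems(1,2) ce(1,2)] IH[OF ce(1) that] IH[OF ce(2) that]
        by simp
      moreover have "w c \<noteq> w e" using ce Suc.prems(2) by (auto dest: inj_onD)
      ultimately show ?thesis by simp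
    qed
    show ?thesis
    proof (cases "Suc m = card B")
      case True
      then obtain m' where m: "m = Suc m'" using \<open>Suc n = card B\<close> Suc by (cases m) auto
      have "divided_difference_power w B m
          = w c * divided_difference_power w B m' + divided_difference_power w (B - {c}) m'"
        unfolding m by (rule divided_difference_power_Suc[OF Suc.prems(1,2) ce(1)])
      thus ?thesis using zero[of m'] IH[OF ce(1), of m'] True m \<open>Suc n = card B\<close> by simp
    qed (use zero Suc.prems \<open>Suc n = card B\<close> in auto)
  qed
qed

section \<open>Sums over the orderings of a finite set\<close>

lemma sum_permutations_of_set_Cons:
  assumes "finite B" "B \<noteq> {}"
  shows "(\<Sum>ys\<in>permutations_of_set B. f ys) = (\<Sum>a\<in>B. \<Sum>ys\<in>permutations_of_set (B - {a}). f (a # ys))"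
proof -
  have "(\<Sum>ys\<in>permutations_of_set B. f ys)
      = (\<Sum>a\<in>B. \<Sum>ys\<in>(#) a ` permutations_of_set (B - {a}). f ys)"
    unfolding permutations_of_set_nonempty[OF assms(2)]
    by (rule sum.UNION_disjoint) (use assms in auto)
  also have "\<dots> = (\<Sum>a\<in>B. \<Sum>ys\<in>permutations_of_set (B - {a}). f (a # ys))"
    by (rule sum.cong[OF refl], subst sum.reindex) auto
  finally show ?thesis .
qed

lemma sum_permutations_of_set_eq_0_if_prefix_sums_eq_0:
  assumes "finite A" "l \<le> card A"
    and "\<And>T. length T = l \<Longrightarrow> distinct T \<Longrightarrow> set T \<subseteq> A \<Longrightarrow>
           (\<Sum>ys\<in>permutations_of_set (A - set T). f (T @ ys)) = (0 :: 'b :: comm_monoid_add)"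
  shows "(\<Sum>xs\<in>permutations_of_set A. f xs) = 0"
  using assms(2,3)
proof (induction l)
  case 0
  thus ?case by simp
next
  case (Suc l)
  show ?case
  proof (rule Suc.IH)
    fix T assume T: "length T = l" "distinct T" "set T \<subseteq> A"
    have "A - set T \<noteq> {}"
      using T Suc.prems(1) card_mono[OF assms(1) T(3)] by (auto simp: distinct_card)
    hence "(\<Sum>ys\<in>permutations_of_set (A - set T). f (T @ ys))
        = (\<Sum>a\<in>A - set T. \<Sum>ys\<in>permutations_of_set (A - set T - {a}). f (T @ a # ys))"
      using assms(1) by (simp add: sum_permutations_of_set_Cons)
    also have "\<dots> = (\<Sum>a\<in>A - set T. \<Sum>ys\<in>permutations_of_set (A - set (T @ [a])). f ((T @ [a]) @ ys))"
    proof -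
      have "A - set T - {a} = A - set (T @ [a])" for a by auto
      thus ?thesis by simp
    qed
    also have "\<dots> = 0"
      using T by (intro sum.neutral ballI Suc.prems(2)) auto
    finally show "(\<Sum>ys\<in>permutations_of_set (A - set T). f (T @ ys)) = 0" .
  qed (use Suc.prems in simp)
qed

lemma sum_permutes_map:
  assumes xs: "distinct xs"
  shows "(\<Sum>\<sigma> | \<sigma> permutes set xs. f (map \<sigma> xs)) = (\<Sum>ys\<in>permutations_of_set (set xs). f ys)"
proof (rule sum.reindex_bij_betw, rule bij_betw_imageI)
  show "inj_on (\<lambda>\<sigma>. map \<sigma> xs) {\<sigma>. \<sigma> permutes set xs}"
  proof (rule inj_onI, rule ext)
    fix \<sigma> \<tau> x assume "\<sigma> \<in> {\<sigma>. \<sigma> permutes set xs}" "\<tau> \<in> {\<sigma>. \<sigma> permutes set xs}" "map \<sigma> xs = map \<tau> xs"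
    thus "\<sigma> x = \<tau> x" by (cases "x \<in> set xs") (auto simp: permutes_not_in)
  qed
  show "(\<lambda>\<sigma>. map \<sigma> xs) ` {\<sigma>. \<sigma> permutes set xs} = permutations_of_set (set xs)"
  proof (intro equalityI subsetI)
    fix ys assume "ys \<in> (\<lambda>\<sigma>. map \<sigma> xs) ` {\<sigma>. \<sigma> permutes set xs}"
    then obtain \<sigma> where \<sigma>: "\<sigma> permutes set xs" and ys: "ys = map \<sigma> xs" by blast
    show "ys \<in> permutations_of_set (set xs)"
      using xs permutes_image[OF \<sigma>] permutes_inj_on[OF \<sigma>]
      by (auto simp: ys distinct_map)
  next
    fix ys assume ys: "ys \<in> permutations_of_set (set xs)"
    have len: "length ys = length xs"
      using length_finite_permutations_of_set[OF ys] xs by (simp add: distinct_card)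
    define \<sigma> where "\<sigma> = permutation_of_list (zip xs ys)"
    have perm: "list_permutes (zip xs ys) (set xs)"
      using ys len xs by (intro list_permutesI) (auto simp: permutations_of_set_def)
    have "map \<sigma> xs = ys"
    proof (rule nth_equalityI)
      fix i assume "i < length (map \<sigma> xs)"
      hence "(xs ! i, ys ! i) \<in> set (zip xs ys)" using len by (auto simp: set_zip)
      thus "map \<sigma> xs ! i = ys ! i"
        using \<open>i < length (map \<sigma> xs)\<close> permutation_of_list_unique[OF perm] by (simp add: \<sigma>_def)
    qed (simp add: len)
    moreover have "\<sigma> permutes set xs" unfolding \<sigma>_def using perm by simp
    ultimately show "ys \<in> (\<lambda>\<sigma>. map \<sigma> xs) ` {\<sigma>. \<sigma> permutes set xs}" by blast
  qed
qed

section \<open>Vertices in general position\<close>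

locale general_position_vertices =
  fixes d :: nat and v :: "nat \<Rightarrow> nat \<Rightarrow> real"
  assumes general_position: "general_position d v"
begin

abbreviation D :: "nat list \<Rightarrow> real" where
  "D \<equiv> affine_det v"

lemma D_nonzero:
  assumes "distinct xs" "set xs \<subseteq> {1..d+1}" "length xs \<le> d"
  shows "D xs \<noteq> 0"
proof (rule affine_det_nonzero[OF _ assms(1)])
  show "aff_indep_proj v (length xs - 1) (set xs)"
  proof (cases "xs = []")
    case False
    hence "length xs - 1 < d" "card (set xs) = length xs - 1 + 1"
      using assms by (cases xs; simp add: distinct_card)+
    thus ?thesis
      using general_position assms(2) unfolding general_position_def by blast
  qed (simp add: aff_indep_proj_def)
qed

text \<open>For \<open>xs = map \<sigma> [1..<j+1]\<close> this is \<open>z(\<sigma>, j)\<close> (lemma zval_eq_z); the index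
  \<open>Suc d\<close> stands for the vertex \<open>v (d + 1)\<close>.\<close>
definition z :: "nat list \<Rightarrow> real" where
  "z xs = D (xs @ [Suc d]) / D xs"

definition phi :: "nat list \<Rightarrow> nat set \<Rightarrow> real" where
  "phi T B = (\<Sum>ys\<in>permutations_of_set B. D (T @ ys) * (\<Prod>i<length ys. z (T @ take (Suc i) ys)))"

text \<open>By affine_det_mult_snoc_mset_eq, any ordering of B may replace the sorted one.\<close>
definition phi_closed :: "nat list \<Rightarrow> nat set \<Rightarrow> real" where
  "phi_closed T B = D (T @ sorted_list_of_set B) * D (T @ sorted_list_of_set B @ [Suc d])
     * D (T @ [Suc d]) ^ (card B - 1) / (\<Prod>p\<in>B. D (T @ [p]))"

text \<open>T lists the vertices placed so far, B those still to be placed after them.\<close>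
definition admissible :: "nat list \<Rightarrow> nat set \<Rightarrow> bool" where
  "admissible T B \<longleftrightarrow> distinct T \<and> finite B \<and> set T \<inter> B = {} \<and> set T \<union> B \<subseteq> {1..d}"

lemma admissible_snoc: "admissible T B \<Longrightarrow> a \<in> B \<Longrightarrow> admissible (T @ [a]) (B - {a})"
  unfolding admissible_def by auto

lemma admissible_D_nonzero:
  assumes adm: "admissible T B"
  shows "a \<in> B \<Longrightarrow> D (T @ [a]) \<noteq> 0"
    and "B \<noteq> {} \<Longrightarrow> D (T @ [Suc d]) \<noteq> 0"
    and "a \<in> B \<Longrightarrow> b \<in> B \<Longrightarrow> a \<noteq> b \<Longrightarrow> D (T @ [a, b]) \<noteq> 0"
    and "a \<in> B \<Longrightarrow> b \<in> B \<Longrightarrow> a \<noteq> b \<Longrightarrow> D (T @ [a, Suc d]) \<noteq> 0"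
proof -
  have fin: "finite B" using adm by (simp add: admissible_def)
  have len: "length T + card B \<le> d"
  proof -
    have "card (set T \<union> B) \<le> card {1..d}"
      using adm unfolding admissible_def by (intro card_mono) auto
    thus ?thesis using adm by (simp add: admissible_def card_Un_disjoint distinct_card)
  qed
  have nonzero: "D (T @ ys) \<noteq> 0"
    if ys: "distinct ys" "set ys \<subseteq> B \<union> {Suc d}" "length ys \<le> card B" for ys
  proof (rule D_nonzero)
    have T: "distinct T" "set T \<subseteq> {1..d}" "set T \<inter> B = {}" and B: "B \<subseteq> {1..d}"
      using adm by (auto simp: admissible_def)
    moreover have "Suc d \<notin> set T" using T(2) by auto
    ultimately have "set T \<inter> set ys = {}" using ys(2) by blast
    thus "distinct (T @ ys)" using T ys by simp
    show "set (T @ ys) \<subseteq> {1..d + 1}" using T(2) B ys(2) by (auto simp: subset_iff)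
    show "length (T @ ys) \<le> d" using len ys(3) by simp
  qed
  show "a \<in> B \<Longrightarrow> D (T @ [a]) \<noteq> 0"
    using fin by (intro nonzero) (auto simp: Suc_le_eq card_gt_0_iff)
  show "B \<noteq> {} \<Longrightarrow> D (T @ [Suc d]) \<noteq> 0"
    using fin by (intro nonzero) (auto simp: Suc_le_eq card_gt_0_iff)
  assume ab: "a \<in> B" "b \<in> B" "a \<noteq> b"
  hence two: "2 \<le> card B" using card_mono[OF fin, of "{a, b}"] by simp
  have "a \<noteq> Suc d" using ab(1) adm by (auto simp: admissible_def subset_iff)
  show "D (T @ [a, b]) \<noteq> 0" using ab two by (intro nonzero) auto
  show "D (T @ [a, Suc d]) \<noteq> 0" using ab two \<open>a \<noteq> Suc d\<close> by (intro nonzero) auto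
qed

lemma D_snoc_pair:
  assumes adm: "admissible T B" and ab: "a \<in> B" "b \<in> B"
  shows "D (T @ [a, b]) = D (T @ [a]) * D (T @ [b]) * (z (T @ [a]) - z (T @ [b])) / D (T @ [Suc d])"
proof -
  have nonzero: "D (T @ [a]) \<noteq> 0" "D (T @ [b]) \<noteq> 0" "D (T @ [Suc d]) \<noteq> 0"
    using admissible_D_nonzero[OF adm] ab by auto
  hence "D (T @ [a, Suc d]) = z (T @ [a]) * D (T @ [a])" "D (T @ [b, Suc d]) = z (T @ [b]) * D (T @ [b])"
    by (simp_all add: z_def)
  hence "D (T @ [Suc d]) * D (T @ [a, b]) = D (T @ [a]) * D (T @ [b]) * (z (T @ [a]) - z (T @ [b]))"
    using affine_det_pluecker[of v T a b "Suc d"] by (simp add: algebra_simps)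
  thus ?thesis using nonzero(3) by (simp add: field_simps)
qed

lemma inj_on_z_snoc:
  assumes adm: "admissible T B"
  shows "inj_on (\<lambda>a. z (T @ [a])) B"
proof (rule inj_onI, rule ccontr)
  fix a b assume ab: "a \<in> B" "b \<in> B" "z (T @ [a]) = z (T @ [b])" "a \<noteq> b"
  thus False using D_snoc_pair[OF adm ab(1,2)] admissible_D_nonzero(3)[OF adm ab(1,2,4)] by simp
qed

lemma z_snoc_nonzero:
  assumes adm: "admissible T B" and a: "a \<in> B" and two: "2 \<le> card B"
  shows "z (T @ [a]) \<noteq> 0"
proof -
  have "card (B - {a}) \<ge> 1" using two a by simp
  hence "B - {a} \<noteq> {}" by (metis card.empty not_one_le_zero)
  then obtain b where "b \<in> B" "b \<noteq> a" by blast
  thus ?thesis using admissible_D_nonzero[OF adm] a by (simp add: z_def)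
qed

lemma sum_completions_by_head:
  assumes "finite B" "B \<noteq> {}"
  shows "(\<Sum>ys\<in>permutations_of_set B. D (T @ ys) * (\<Prod>i<length ys. z (T @ take (Suc i) ys)) * f (hd ys))
       = (\<Sum>a\<in>B. f a * z (T @ [a]) * phi (T @ [a]) (B - {a}))"
proof -
  have "(\<Prod>i<length (a # ys). z (T @ take (Suc i) (a # ys)))
      = z (T @ [a]) * (\<Prod>i<length ys. z ((T @ [a]) @ take (Suc i) ys))" for a ys
    by (simp only: length_Cons prod.lessThan_Suc_shift) simp
  thus ?thesis
    unfolding phi_def sum_permutations_of_set_Cons[OF assms] sum_distrib_left
    by (intro sum.cong refl) (simp add: algebra_simps)
qed

lemma prod_D_snoc_pair:
  assumes adm: "admissible T B" and a: "a \<in> B"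
  shows "(\<Prod>b\<in>B - {a}. D (T @ [a, b])) = D (T @ [a]) ^ card (B - {a})
           * ((\<Prod>b\<in>B - {a}. D (T @ [b])) * (\<Prod>b\<in>B - {a}. z (T @ [a]) - z (T @ [b])))
           / D (T @ [Suc d]) ^ card (B - {a})"
proof -
  have "(\<Prod>b\<in>B - {a}. D (T @ [a, b]))
      = (\<Prod>b\<in>B - {a}. D (T @ [a]) * (D (T @ [b]) * (z (T @ [a]) - z (T @ [b]))) / D (T @ [Suc d]))"
    using D_snoc_pair[OF adm a] by (intro prod.cong refl) (simp add: mult.assoc)
  thus ?thesis by (simp add: prod_dividef prod.distrib)
qed

lemma phi_closed_snoc:
  assumes adm: "admissible T B" and card: "card B = Suc (Suc m)" and a: "a \<in> B"
  shows "phi_closed (T @ [a]) (B - {a})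
           = phi_closed T B * z (T @ [a]) ^ m / (\<Prod>b\<in>B - {a}. z (T @ [a]) - z (T @ [b]))"
proof -
  have fin: "finite B" using adm by (simp add: admissible_def)
  define C where "C = D (T @ [Suc d])"
  define Da where "Da = D (T @ [a])"
  define wa where "wa = z (T @ [a])"
  define P where "P = (\<Prod>b\<in>B - {a}. D (T @ [b]))"
  define Q where "Q = (\<Prod>b\<in>B - {a}. wa - z (T @ [b]))"
  define X where "X = D (T @ sorted_list_of_set B) * D (T @ sorted_list_of_set B @ [Suc d])"
  have nonzero: "C \<noteq> 0" "Da \<noteq> 0" "P \<noteq> 0"
    using admissible_D_nonzero[OF adm] a fin by (auto simp: C_def Da_def P_def)
  have "Q \<noteq> 0"
    using inj_on_z_snoc[OF adm] fin a by (auto simp: Q_def wa_def dest: inj_onD)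
  have "mset (a # sorted_list_of_set (B - {a})) = mset (sorted_list_of_set B)"
    using fin a by (subst set_eq_iff_mset_eq_distinct[symmetric]) auto
  hence "mset (T @ a # sorted_list_of_set (B - {a})) = mset (T @ sorted_list_of_set B)"
    by simp
  hence X: "D (T @ a # sorted_list_of_set (B - {a})) * D (T @ a # sorted_list_of_set (B - {a}) @ [Suc d]) = X"
    unfolding X_def using affine_det_mult_snoc_mset_eq by fastforce
  have pairs: "(\<Prod>b\<in>B - {a}. D (T @ [a, b])) = Da ^ Suc m * (P * Q) / C ^ Suc m"
    using prod_D_snoc_pair[OF adm a] fin a card by (simp add: Da_def P_def Q_def wa_def C_def)
  have "D (T @ [a, Suc d]) = wa * Da" using nonzero(2) by (simp add: wa_def Da_def z_def)
  hence "phi_closed (T @ [a]) (B - {a}) = X * (wa * Da) ^ m / (Da ^ Suc m * (P * Q) / C ^ Suc m)"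
    using fin a card by (simp add: phi_closed_def X pairs)
  also have "\<dots> = X * C ^ Suc m / (Da * P) * wa ^ m / Q"
    using nonzero \<open>Q \<noteq> 0\<close> by (simp add: field_simps power_mult_distrib)
  also have "X * C ^ Suc m / (Da * P) = phi_closed T B"
    using fin a card by (simp add: phi_closed_def X_def C_def Da_def P_def prod.remove)
  finally show ?thesis by (simp add: wa_def Q_def)
qed

lemma phi_eq_phi_closed:
  assumes "admissible T B" "B \<noteq> {}"
  shows "phi T B = phi_closed T B"
proof -
  obtain n where "card B = Suc n"
    using assms by (metis admissible_def card_0_eq not0_implies_Suc)
  thus ?thesis using assms(1)
  proof (induction n arbitrary: T B)
    case 0
    then obtain a where B: "B = {a}" by (metis One_nat_def card_1_singletonE)
    have "D (T @ [a]) \<noteq> 0" using admissible_D_nonzero(1)[OF 0(2)] B by simp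
    thus ?case by (simp add: B phi_def phi_closed_def z_def)
  next
    case (Suc m)
    have fin: "finite B" "B \<noteq> {}" using Suc.prems by (auto simp: admissible_def)
    have "phi T B = (\<Sum>a\<in>B. z (T @ [a]) * phi (T @ [a]) (B - {a}))"
      using sum_completions_by_head[OF fin, of T "\<lambda>_. 1"] by (simp add: phi_def)
    also have "\<dots> = (\<Sum>a\<in>B. phi_closed T B * (z (T @ [a]) ^ Suc m / (\<Prod>b\<in>B - {a}. z (T @ [a]) - z (T @ [b]))))"
    proof (rule sum.cong[OF refl])
      fix a assume a: "a \<in> B"
      have "phi (T @ [a]) (B - {a}) = phi_closed (T @ [a]) (B - {a})"
        using Suc.IH[OF _ admissible_snoc[OF Suc.prems(2) a]] Suc.prems(1) a fin by simp
      thus "z (T @ [a]) * phi (T @ [a]) (B - {a})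
          = phi_closed T B * (z (T @ [a]) ^ Suc m / (\<Prod>b\<in>B - {a}. z (T @ [a]) - z (T @ [b])))"
        using phi_closed_snoc[OF Suc.prems(2,1) a] by simp
    qed
    also have "\<dots> = phi_closed T B * divided_difference_power (\<lambda>a. z (T @ [a])) B (Suc m)"
      by (simp add: divided_difference_power_def sum_distrib_left)
    also have "divided_difference_power (\<lambda>a. z (T @ [a])) B (Suc m) = 1"
      using divided_difference_power_below_card[OF fin(1) inj_on_z_snoc[OF Suc.prems(2)]] Suc.prems(1)
      by simp
    finally show ?case by simp
  qed
qed

lemma completion_sum_div_head_power_eq_0:
  assumes adm: "admissible T B" and k: "k + 2 \<le> card B"
  shows "(\<Sum>ys\<in>permutations_of_set B.
           D (T @ ys) * (\<Prod>i<length ys. z (T @ take (Suc i) ys)) / z (T @ [hd ys]) ^ Suc k) = 0"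
proof -
  have fin: "finite B" "B \<noteq> {}" using adm k by (auto simp: admissible_def)
  define m where "m = card B - 2"
  have card: "card B = Suc (Suc m)" and "k \<le> m" using k by (auto simp: m_def)
  let ?w = "\<lambda>a. z (T @ [a])"
  have "(\<Sum>ys\<in>permutations_of_set B.
           D (T @ ys) * (\<Prod>i<length ys. z (T @ take (Suc i) ys)) / ?w (hd ys) ^ Suc k)
      = (\<Sum>a\<in>B. inverse (?w a ^ Suc k) * ?w a * phi (T @ [a]) (B - {a}))"
    using sum_completions_by_head[OF fin, of T "\<lambda>a. inverse (?w a ^ Suc k)"]
    by (simp add: divide_inverse)
  also have "\<dots> = (\<Sum>a\<in>B. phi_closed T B * (?w a ^ (m - k) / (\<Prod>b\<in>B - {a}. ?w a - ?w b)))"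
  proof (rule sum.cong[OF refl])
    fix a assume a: "a \<in> B"
    have "?w a \<noteq> 0" using z_snoc_nonzero[OF adm a] card by simp
    hence "inverse (?w a ^ Suc k) * ?w a * ?w a ^ m = ?w a ^ (m - k)"
      using \<open>k \<le> m\<close> by (simp add: power_diff field_simps)
    moreover have "card (B - {a}) = Suc m" using card fin a by simp
    hence "phi (T @ [a]) (B - {a}) = phi_closed (T @ [a]) (B - {a})"
      by (intro phi_eq_phi_closed admissible_snoc[OF adm a]) (metis card.empty Zero_not_Suc)
    ultimately show "inverse (?w a ^ Suc k) * ?w a * phi (T @ [a]) (B - {a})
        = phi_closed T B * (?w a ^ (m - k) / (\<Prod>b\<in>B - {a}. ?w a - ?w b))"
      using phi_closed_snoc[OF adm card a] by (simp add: field_simps)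
  qed
  also have "\<dots> = phi_closed T B * divided_difference_power ?w B (m - k)"
    by (simp add: divided_difference_power_def sum_distrib_left)
  also have "divided_difference_power ?w B (m - k) = 0"
    using divided_difference_power_below_card[OF fin(1) inj_on_z_snoc[OF adm]] card by simp
  finally show ?thesis by simp
qed

lemma zval_eq_z: "zval d v \<sigma> j = z (map \<sigma> [1..<j+1])"
  by (simp add: zval_def z_def affine_det_def Xmat_eq_affine_mat Ymat_eq_affine_mat del: upt_Suc)

definition ordered_summand :: "nat \<Rightarrow> nat \<Rightarrow> (real list \<Rightarrow> real) \<Rightarrow> nat list \<Rightarrow> real" where
  "ordered_summand l k p xs = D xs * p (map (\<lambda>j. z (take j xs)) [1..<l+1])
     * (\<Prod>j = l+1..d. z (take j xs)) / z (take (l+1) xs) ^ (k+1)"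

lemma summand_eq_ordered_summand:
  assumes \<sigma>: "\<sigma> permutes {1..d}" and l: "l < d"
  shows "(sign \<sigma> :: real) * p (map (zval d v \<sigma>) [1..<l+1])
           * (\<Prod>j = l+1..d. zval d v \<sigma> j) / zval d v \<sigma> (l+1) ^ (k+1)
       = ordered_summand l k p (map \<sigma> [1..<d+1]) / D [1..<d+1]"
proof -
  have z: "zval d v \<sigma> j = z (take j (map \<sigma> [1..<d+1]))" if "j \<le> d" for j
    using that by (simp add: zval_eq_z take_map take_upt min_def del: upt_Suc)
  have "D (map \<sigma> [1..<d+1]) = sign \<sigma> * D [1..<d+1]"
    using affine_det_map_permutes[of "[1..<d+1]" \<sigma> v] \<sigma>
    by (simp add: atLeastLessThanSuc_atLeastAtMost del: upt_Suc)
  moreover have "D [1..<d+1] \<noteq> 0" by (rule D_nonzero) (auto simp del: upt_Suc)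
  ultimately have sign: "(sign \<sigma> :: real) = D (map \<sigma> [1..<d+1]) / D [1..<d+1]" by simp
  have map: "map (zval d v \<sigma>) [1..<l+1] = map (\<lambda>j. z (take j (map \<sigma> [1..<d+1]))) [1..<l+1]"
    using l by (intro map_cong refl) (simp add: z del: upt_Suc)
  have prod: "(\<Prod>j = l+1..d. zval d v \<sigma> j) = (\<Prod>j = l+1..d. z (take j (map \<sigma> [1..<d+1])))"
    by (intro prod.cong refl) (simp add: z)
  have head: "zval d v \<sigma> (l+1) = z (take (l+1) (map \<sigma> [1..<d+1]))"
    using l by (intro z) simp
  show ?thesis
    unfolding ordered_summand_def sign map prod head by (simp only: divide_inverse ac_simps)
qed

lemma sum_ordered_summand_completions_eq_0:
  assumes lkd: "l + k + 2 \<le> d" and T: "length T = l" "distinct T" "set T \<subseteq> {1..d}"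
  shows "(\<Sum>ys\<in>permutations_of_set ({1..d} - set T). ordered_summand l k p (T @ ys)) = 0"
proof -
  define B where "B = {1..d} - set T"
  have adm: "admissible T B" using T by (auto simp: admissible_def B_def)
  have card: "card B = d - l" using T by (simp add: B_def card_Diff_subset distinct_card)
  define q where "q = p (map (\<lambda>j. z (take j T)) [1..<l+1])"
  have "ordered_summand l k p (T @ ys)
      = q * (D (T @ ys) * (\<Prod>i<length ys. z (T @ take (Suc i) ys)) / z (T @ [hd ys]) ^ Suc k)"
    if ys: "ys \<in> permutations_of_set B" for ys
  proof -
    have len: "length ys = d - l" using length_finite_permutations_of_set[OF ys] card by simp
    have map: "map (\<lambda>j. z (take j (T @ ys))) [1..<l+1] = map (\<lambda>j. z (take j T)) [1..<l+1]"
      using T(1) by (intro map_cong refl) (simp del: upt_Suc)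
    have prod: "(\<Prod>j = l+1..d. z (take j (T @ ys))) = (\<Prod>i<length ys. z (T @ take (Suc i) ys))"
      using prod.atLeastLessThan_shift_0[of "\<lambda>j. z (take j (T @ ys))" "l+1" "Suc d"] T(1) len
      by (simp add: atLeastLessThanSuc_atLeastAtMost atLeast0LessThan)
    have head: "take (l+1) (T @ ys) = T @ [hd ys]"
      using T(1) len lkd by (cases ys) auto
    show ?thesis
      unfolding ordered_summand_def map prod head q_def Suc_eq_plus1 by (simp only: divide_inverse ac_simps)
  qed
  hence "(\<Sum>ys\<in>permutations_of_set B. ordered_summand l k p (T @ ys))
      = q * (\<Sum>ys\<in>permutations_of_set B.
               D (T @ ys) * (\<Prod>i<length ys. z (T @ take (Suc i) ys)) / z (T @ [hd ys]) ^ Suc k)"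
    by (simp add: sum_distrib_left)
  also have "\<dots> = 0"
    using completion_sum_div_head_power_eq_0[OF adm] card lkd by simp
  finally show ?thesis by (simp add: B_def)
qed

end

theorem mainTheorem16:
  fixes d l k :: nat and v :: "nat \<Rightarrow> nat \<Rightarrow> real" and p :: "real list \<Rightarrow> real"
  assumes "is_d_simplex d v"
    and "general_position d v"
    and "l + k + 2 \<le> d"
  shows "(\<Sum>\<sigma> | \<sigma> permutes {1..d}.
           (sign \<sigma> :: real) * p (map (zval d v \<sigma>) [1..<l+1])
           * (\<Prod>j = l+1..d. zval d v \<sigma> j) / zval d v \<sigma> (l+1) ^ (k+1)) = 0"
proof -
  interpret general_position_vertices d v by unfold_locales (rule assms(2))
  have "(\<Sum>\<sigma> | \<sigma> permutes {1..d}.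
           (sign \<sigma> :: real) * p (map (zval d v \<sigma>) [1..<l+1])
           * (\<Prod>j = l+1..d. zval d v \<sigma> j) / zval d v \<sigma> (l+1) ^ (k+1))
      = (\<Sum>\<sigma> | \<sigma> permutes {1..d}. ordered_summand l k p (map \<sigma> [1..<d+1]) / D [1..<d+1])"
    using assms(3) by (intro sum.cong refl summand_eq_ordered_summand) auto
  also have "\<dots> = (\<Sum>\<sigma> | \<sigma> permutes {1..d}. ordered_summand l k p (map \<sigma> [1..<d+1])) / D [1..<d+1]"
    by (simp only: sum_divide_distrib)
  also have "(\<Sum>\<sigma> | \<sigma> permutes {1..d}. ordered_summand l k p (map \<sigma> [1..<d+1]))
      = (\<Sum>xs\<in>permutations_of_set {1..d}. ordered_summand l k p xs)"
    using sum_permutes_map[of "[1..<d+1]" "ordered_summand l k p"]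
    by (simp add: atLeastLessThanSuc_atLeastAtMost del: upt_Suc)
  also have "(\<Sum>xs\<in>permutations_of_set {1..d}. ordered_summand l k p xs) = 0"
    by (rule sum_permutations_of_set_eq_0_if_prefix_sums_eq_0[where f = "ordered_summand l k p",
        OF _ _ sum_ordered_summand_completions_eq_0[OF assms(3)]]) (use assms(3) in simp_all)
  finally show ?thesis by simp
qed

end
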